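(* Assume $b\ne0$. Then $\varphi(\lambda)\sim-\frac1{|b|}\ln\lambda$ as $\lambda\to0$, $-\ln g(x)\sim|b|x$ as $x\to\infty$, and for any function $\lambda_t\to0+$ as $t\to\infty$: $\ln v_t(\lambda_t)\sim-b\,(t+\varphi(\lambda_t))$ as $t\to\infty$ if $b>0$; and $\ln v_t(\rho_t\lambda_t)\sim\ln\lambda_t$ as $t\to\infty$ if $b<0$.
   Context: Let $\sigma\ge 0$, $b\in\mathbb R$, and $\pi$ a $\sigma$-finite measure on $(0,\infty)$ with $\int_0^\infty (z\wedge z^2)\pi(\mathrm{d}z)<\infty$; $\Psi(q)=bq+\frac12\sigma^2q^2+\int_0^\infty(e^{-qu}-1+qu)\pi(\mathrm{d}u)$. For $\lambda\ge 0$, $t\mapsto v_t(\lambda)$ solves $\frac{\partial}{\partial t}v_t(\lambda)=-\Psi(v_t(\lambda))$, $v_0(\lambda)=\lambda$; $v_{-t}$ denotes the inverse of the strictly increasing map $\lambda\mapsto v_t(\lambda)$. Let $\rho=\inf\{z>0:\Psi(z)\ge0\}$ ($\inf\emptyset=\infty$). Fix $\lambda_0\in(0,\infty)$ if $b\ge0$ and $\lambda_0\in(0,\rho)$ if $b<0$; set $\varphi(\lambda)=\int_\lambda^{\lambda_0}\frac{\mathrm{d}u}{|\Psi(u)|}$ for $0<\lambda<\lambda_0$, a strictly decreasing bijection $(0,\lambda_0)\to(0,\infty)$, and let $g$ be its inverse. Set $\rho_t=1$ if $b>0$ and $\rho_t=v_{-t}(\lambda_0)$ if $b<0$. *)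

theory Defs
  imports "HOL-Analysis.Analysis" "HOL-Library.Landau_Symbols"
begin

definition Psi :: "real \<Rightarrow> real \<Rightarrow> real measure \<Rightarrow> real \<Rightarrow> real" where
  "Psi b \<sigma> \<pi> q = b * q + (1/2) * \<sigma>^2 * q^2
      + (LINT u:{0<..}|\<pi>. exp (- q * u) - 1 + q * u)"

definition rho_Psi :: "real \<Rightarrow> real \<Rightarrow> real measure \<Rightarrow> ereal" where
  "rho_Psi b \<sigma> \<pi> = Inf (ereal ` {z. z > 0 \<and> Psi b \<sigma> \<pi> z \<ge> 0})"

definition phi :: "real \<Rightarrow> real \<Rightarrow> real measure \<Rightarrow> real \<Rightarrow> real \<Rightarrow> real" where
  "phi b \<sigma> \<pi> l0 l = integral {l..l0} (\<lambda>u. 1 / \<bar>Psi b \<sigma> \<pi> u\<bar>)"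

definition ginv :: "real \<Rightarrow> real \<Rightarrow> real measure \<Rightarrow> real \<Rightarrow> real \<Rightarrow> real" where
  "ginv b \<sigma> \<pi> l0 x = (THE l. 0 < l \<and> l < l0 \<and> phi b \<sigma> \<pi> l0 l = x)"

text \<open>v_{-t}(mu): inverse of the strictly increasing map lambda |-> v_t(lambda) on [0,inf).\<close>
definition vinv :: "(real \<Rightarrow> real \<Rightarrow> real) \<Rightarrow> real \<Rightarrow> real \<Rightarrow> real" where
  "vinv v t \<mu> = (THE l. 0 \<le> l \<and> v t l = \<mu>)"

definition rho_t :: "real \<Rightarrow> (real \<Rightarrow> real \<Rightarrow> real) \<Rightarrow> real \<Rightarrow> real \<Rightarrow> real" where
  "rho_t b v l0 t = (if b > 0 then 1 else vinv v t l0)"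

end

theory Submission
  imports Defs
begin

(* Since Psi(q) = b q + o(q) as q -> 0 (dominated convergence, using the moment condition on pi),
   u / |Psi(u)| -> 1/|b|, and L'Hopital's rule gives phi(lambda) ~ -ln(lambda) / |b|; inverting,
   -ln g(x) ~ |b| x.
   phi is a first integral of the flow: while v_s(lambda) stays in (0, lambda0), phi(v_s(lambda))
   moves with constant speed sgn b. Hence v_t(lambda) = g(phi(lambda) + t) if b > 0, while for b < 0
   v_t(lambda) = g(phi(lambda) - t) as long as t < phi(lambda), which gives rho_t = g(t). The last two
   claims thereby reduce to the asymptotics of g and to
   phi(g(t) lambda_t) - t = int_{g(t) lambda_t}^{g(t)} du / |Psi(u)| ~ -ln(lambda_t) / |b|,
   which holds because u / |Psi(u)| -> 1/|b| uniformly on these shrinking intervals. *)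

lemma exp_neg_sub_one_add_bounds:
  fixes x :: real
  assumes "0 \<le> x"
  shows "0 \<le> exp (- x) - 1 + x" and "exp (- x) - 1 + x \<le> x" and "exp (- x) - 1 + x \<le> x\<^sup>2 / 2"
proof -
  show "0 \<le> exp (- x) - 1 + x"
    using exp_ge_add_one_self[of "- x"] by simp
  show "exp (- x) - 1 + x \<le> x"
    using assms by simp
  let ?h = "\<lambda>x::real. 1 - x + x\<^sup>2 / 2 - exp (- x)"
  have "?h 0 \<le> ?h x"
  proof (rule DERIV_nonneg_imp_nondecreasing[OF assms])
    fix y :: real
    show "\<exists>d. (?h has_real_derivative d) (at y) \<and> 0 \<le> d"
      using exp_ge_add_one_self[of "- y"] by (auto intro!: exI derivative_eq_intros)
  qed
  then show "exp (- x) - 1 + x \<le> x\<^sup>2 / 2"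
    by simp
qed

lemma tendsto_integral_dominated_within:
  fixes G :: "'c::first_countable_topology \<Rightarrow> 'a \<Rightarrow> 'b::{banach, second_countable_topology}"
  assumes "integrable M h"
    and "\<And>q. q \<in> S \<Longrightarrow> G q \<in> borel_measurable M" and "G0 \<in> borel_measurable M"
    and "\<And>q u. q \<in> S \<Longrightarrow> norm (G q u) \<le> h u"
    and lim: "\<And>u. ((\<lambda>q. G q u) \<longlongrightarrow> G0 u) (at x within S)"
  shows "((\<lambda>q. integral\<^sup>L M (G q)) \<longlongrightarrow> integral\<^sup>L M G0) (at x within S)"
  unfolding tendsto_at_iff_sequentially o_def
proof (intro allI impI)
  fix X :: "nat \<Rightarrow> 'c"
  assume X: "\<forall>i. X i \<in> S - {x}" "X \<longlonglongrightarrow> x"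
  show "(\<lambda>i. integral\<^sup>L M (G (X i))) \<longlonglongrightarrow> integral\<^sup>L M G0"
  proof (rule integral_dominated_convergence[where w = h])
    show "AE u in M. (\<lambda>i. G (X i) u) \<longlonglongrightarrow> G0 u"
      using lim X unfolding tendsto_at_iff_sequentially o_def by blast
  qed (use X assms in auto)
qed

lemma eventually_at_right_0_between:
  assumes "filterlim f (at_right 0) F" "(0::real) < c"
  shows "eventually (\<lambda>t. 0 < f t \<and> f t < c) F"
  using assms(1) eventually_at_right_real[OF assms(2)] by (auto simp: filterlim_iff)

lemma filterlim_neg_mult_ln_at_top:
  fixes f :: "'a \<Rightarrow> real"
  assumes "filterlim f (at_right 0) F" "0 < c"
  shows "filterlim (\<lambda>x. - c * ln (f x)) at_top F"
proof -
  have "filterlim (\<lambda>x. c * - ln (f x)) at_top F"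
    using filterlim_compose[OF ln_at_0 assms(1)] assms(2)
    by (intro filterlim_tendsto_pos_mult_at_top[OF tendsto_const]) (auto simp: filterlim_uminus_at_bot)
  then show ?thesis
    by simp
qed

lemma integral_log_deviation_le:
  fixes f :: "real \<Rightarrow> real"
  assumes "0 < x" "x \<le> y" "f integrable_on {x..y}"
    and dev: "\<And>u. u \<in> {x..y} \<Longrightarrow> \<bar>u * f u - c\<bar> \<le> \<epsilon>"
  shows "\<bar>integral {x..y} f - c * (ln y - ln x)\<bar> \<le> \<epsilon> * (ln y - ln x)"
proof -
  have ln_integral: "((\<lambda>u. 1 / u) has_integral (ln y - ln x)) {x..y}"
    using assms(1,2)
    by (intro fundamental_theorem_of_calculus)
       (auto intro!: derivative_eq_intros simp: has_real_derivative_iff_has_vector_derivative[symmetric])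
  have scaled: "((\<lambda>u. c * (1 / u)) has_integral c * (ln y - ln x)) {x..y}"
    using has_integral_mult_right[OF ln_integral] .
  have "integral {x..y} f - c * (ln y - ln x) = integral {x..y} (\<lambda>u. f u - c * (1 / u))"
    using integral_diff[OF assms(3) has_integral_integrable[OF scaled]] integral_unique[OF scaled]
    by simp
  also have "norm \<dots> \<le> integral {x..y} (\<lambda>u. \<epsilon> * (1 / u))"
  proof (rule Henstock_Kurzweil_Integration.integral_norm_bound_integral)
    show "(\<lambda>u. f u - c * (1 / u)) integrable_on {x..y}"
      by (rule integrable_diff[OF assms(3) has_integral_integrable[OF scaled]])
    show "(\<lambda>u. \<epsilon> * (1 / u)) integrable_on {x..y}"
      by (rule has_integral_integrable[OF has_integral_mult_right[OF ln_integral]])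
    show "norm (f u - c * (1 / u)) \<le> \<epsilon> * (1 / u)" if "u \<in> {x..y}" for u
    proof -
      have "u > 0" using that assms(1) by simp
      then have "\<bar>f u - c * (1 / u)\<bar> = \<bar>u * f u - c\<bar> / u"
        by (simp add: field_simps abs_div)
      then show ?thesis
        using dev[OF that] \<open>u > 0\<close> by (simp add: divide_right_mono)
    qed
  qed
  also have "\<dots> = \<epsilon> * (ln y - ln x)"
    by (rule integral_unique[OF has_integral_mult_right[OF ln_integral]])
  finally show ?thesis
    by simp
qed

lemma integral_asymp_equiv_ln_ratio:
  fixes f :: "real \<Rightarrow> real" and x y :: "'a \<Rightarrow> real"
  assumes lim: "((\<lambda>u. u * f u) \<longlongrightarrow> c) (at_right 0)" and "c \<noteq> 0"
    and cont: "continuous_on {0<..a} f" and "0 < a"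
    and y: "filterlim y (at_right 0) F" and xy: "eventually (\<lambda>t. 0 < x t \<and> x t \<le> y t) F"
  shows "(\<lambda>t. integral {x t..y t} f) \<sim>[F] (\<lambda>t. c * (ln (y t) - ln (x t)))"
  unfolding asymp_equiv_altdef
proof (rule landau_o.smallI)
  fix \<epsilon> :: real
  assume "\<epsilon> > 0"
  then have "eventually (\<lambda>u. dist (u * f u) c < \<epsilon> * \<bar>c\<bar>) (at_right 0)"
    using lim \<open>c \<noteq> 0\<close> by (intro tendstoD) auto
  then obtain d where "d > 0" and d: "\<And>u. 0 < u \<Longrightarrow> u < d \<Longrightarrow> \<bar>u * f u - c\<bar> < \<epsilon> * \<bar>c\<bar>"
    unfolding eventually_at_right_field dist_real_def by auto
  have "(y \<longlongrightarrow> 0) F"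
    using y by (simp add: filterlim_at)
  then have "eventually (\<lambda>t. y t < min d a) F"
    using \<open>d > 0\<close> \<open>0 < a\<close> by (intro order_tendstoD(2)) auto
  with xy show "eventually (\<lambda>t. norm (integral {x t..y t} f - c * (ln (y t) - ln (x t)))
      \<le> \<epsilon> * norm (c * (ln (y t) - ln (x t)))) F"
  proof eventually_elim
    case (elim t)
    have "f integrable_on {x t..y t}"
      using elim by (intro integrable_continuous_real continuous_on_subset[OF cont]) auto
    then have "\<bar>integral {x t..y t} f - c * (ln (y t) - ln (x t))\<bar> \<le> \<epsilon> * \<bar>c\<bar> * (ln (y t) - ln (x t))"
      using elim d by (intro integral_log_deviation_le) (auto intro: less_imp_le)
    moreover have "ln (x t) \<le> ln (y t)"
      using elim by simp
    ultimately show ?case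
      by (simp add: abs_mult)
  qed
qed

lemma jump_integrand_le:
  fixes q u :: real
  assumes "0 \<le> q" "0 \<le> u"
  shows "exp (- q * u) - 1 + q * u \<le> q * max 1 q * min u (u\<^sup>2)"
proof -
  have "q * 1 \<le> q * max 1 q" "q * q \<le> q * max 1 q"
    using assms by (intro mult_left_mono; simp)+
  then have lin: "q * u \<le> q * max 1 q * u" and quad: "q * q * u\<^sup>2 \<le> q * max 1 q * u\<^sup>2"
    using assms by (auto intro!: mult_right_mono)
  show ?thesis
  proof (cases "u \<le> u\<^sup>2")
    case True
    show ?thesis
      unfolding min_absorb1[OF True] mult_minus_left
      using exp_neg_sub_one_add_bounds(2)[OF mult_nonneg_nonneg[OF assms]] lin by linarith
  next
    case False
    have "exp (- q * u) - 1 + q * u \<le> (q * u)\<^sup>2 / 2"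
      unfolding mult_minus_left by (rule exp_neg_sub_one_add_bounds(3)[OF mult_nonneg_nonneg[OF assms]])
    also have "\<dots> \<le> q * q * u\<^sup>2"
      using assms by (simp add: power2_eq_square mult_ac)
    also note quad
    finally show ?thesis
      using False by (simp add: min_def)
  qed
qed

locale branching_levy_measure =
  fixes \<pi> :: "real measure"
  assumes sets_\<pi>: "sets \<pi> = sets borel"
    and moment: "(\<integral>\<^sup>+ z\<in>{0<..}. ennreal (min z (z\<^sup>2)) \<partial>\<pi>) < \<infinity>"
begin

lemmas [measurable_cong] = sets_\<pi>

definition jump_part :: "real \<Rightarrow> real" where
  "jump_part q = (LINT u:{0<..}|\<pi>. exp (- q * u) - 1 + q * u)"

lemma Psi_eq_jump_part: "Psi b \<sigma> \<pi> q = b * q + (1/2) * \<sigma>\<^sup>2 * q\<^sup>2 + jump_part q"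
  by (simp add: Psi_def jump_part_def)

lemma jump_part_eq_integral:
  "jump_part q = (\<integral>u. indicator {0<..} u * (exp (- q * u) - 1 + q * u) \<partial>\<pi>)"
  by (simp add: jump_part_def set_lebesgue_integral_def)

lemma integrable_min_moment: "integrable \<pi> (\<lambda>u. indicator {0<..} u * min u (u\<^sup>2))"
proof (rule integrableI_nonneg)
  have "(\<integral>\<^sup>+ u. ennreal (indicator {0<..} u * min u (u\<^sup>2)) \<partial>\<pi>) = (\<integral>\<^sup>+ z\<in>{0<..}. ennreal (min z (z\<^sup>2)) \<partial>\<pi>)"
    by (intro nn_integral_cong) (auto split: split_indicator)
  then show "(\<integral>\<^sup>+ u. ennreal (indicator {0<..} u * min u (u\<^sup>2)) \<partial>\<pi>) < \<infinity>"
    using moment by simp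
qed (auto split: split_indicator)

lemma jump_part_nonneg: "0 \<le> q \<Longrightarrow> 0 \<le> jump_part q"
  unfolding jump_part_eq_integral
  using exp_neg_sub_one_add_bounds(1)
  by (intro integral_nonneg_AE AE_I2) (auto split: split_indicator)

lemma jump_part_div_tendsto_0: "((\<lambda>q. jump_part q / q) \<longlongrightarrow> 0) (at_right 0)"
proof -
  let ?G = "\<lambda>q u. indicator {0<..} u * (exp (- q * u) - 1 + q * u) / q"
  have "((\<lambda>q. integral\<^sup>L \<pi> (?G q)) \<longlongrightarrow> integral\<^sup>L \<pi> (\<lambda>u. 0)) (at 0 within {0<..1})"
  proof (rule tendsto_integral_dominated_within[OF integrable_min_moment])
    show "norm (?G q u) \<le> indicator {0<..} u * min u (u\<^sup>2)" if "q \<in> {0<..1}" for q u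
      using that jump_integrand_le[of q u] exp_neg_sub_one_add_bounds(1)[of "q * u"]
      by (auto split: split_indicator simp: divide_le_eq mult.commute)
    show "((\<lambda>q. ?G q u) \<longlongrightarrow> 0) (at 0 within {0<..1})" for u :: real
    proof (rule tendsto_sandwich[where f = "\<lambda>_. 0" and h = "\<lambda>q. q * u\<^sup>2 / 2"])
      show "eventually (\<lambda>q. 0 \<le> ?G q u) (at 0 within {0<..1})"
        using exp_neg_sub_one_add_bounds(1)[of "_ * u"]
        by (auto simp: eventually_at_filter split: split_indicator)
      have "?G q u \<le> q * u\<^sup>2 / 2" if "0 < q" for q
      proof (cases "0 < u")
        case True
        then have "exp (- q * u) - 1 + q * u \<le> q * (q * u\<^sup>2 / 2)"
          using exp_neg_sub_one_add_bounds(3)[of "q * u"] that by (simp add: power2_eq_square mult_ac)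
        then show ?thesis
          using True that by (simp add: divide_le_eq mult.commute)
      qed (use that in simp)
      then show "eventually (\<lambda>q. ?G q u \<le> q * u\<^sup>2 / 2) (at 0 within {0<..1})"
        by (auto simp: eventually_at_filter)
      show "((\<lambda>q. q * u\<^sup>2 / 2) \<longlongrightarrow> 0) (at 0 within {0<..1})"
        by (auto intro!: tendsto_eq_intros)
    qed simp
  qed simp_all
  moreover have "at 0 within {0<..1} = at_right (0::real)"
    by (rule at_within_nhd[where S = "{-1<..<1}"]) auto
  ultimately show ?thesis
    by (simp add: jump_part_eq_integral)
qed

lemma continuous_on_jump_part: "continuous_on {0<..} jump_part"
  unfolding continuous_on_eq_continuous_at[OF open_greaterThan]
proof
  fix q0 :: real
  assume "q0 \<in> {0<..}"
  let ?G = "\<lambda>q u. indicator {0<..} u * (exp (- q * u) - 1 + q * u)"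
  let ?C = "2 * q0 * max 1 (2 * q0)"
  have "((\<lambda>q. integral\<^sup>L \<pi> (?G q)) \<longlongrightarrow> integral\<^sup>L \<pi> (?G q0)) (at q0 within {0<..<2 * q0})"
  proof (rule tendsto_integral_dominated_within)
    show "integrable \<pi> (\<lambda>u. ?C * (indicator {0<..} u * min u (u\<^sup>2)))"
      using integrable_min_moment by simp
    show "norm (?G q u) \<le> ?C * (indicator {0<..} u * min u (u\<^sup>2))" if "q \<in> {0<..<2 * q0}" for q u
    proof (cases "u > 0")
      case True
      have "q * max 1 q * min u (u\<^sup>2) \<le> ?C * min u (u\<^sup>2)"
        using that True by (intro mult_right_mono mult_mono) auto
      then have "exp (- q * u) - 1 + q * u \<le> ?C * min u (u\<^sup>2)"
        using that True by (intro order_trans[OF jump_integrand_le[of q u]]) auto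
      then show ?thesis
        using True that exp_neg_sub_one_add_bounds(1)[of "q * u"] by simp
    qed simp
  qed (auto intro!: tendsto_intros)
  moreover have "at q0 within {0<..<2 * q0} = at q0"
    using \<open>q0 \<in> {0<..}\<close> by (intro at_within_open) auto
  ultimately show "isCont jump_part q0"
    by (simp add: isCont_def jump_part_eq_integral[abs_def])
qed

lemma Psi_div_tendsto: "((\<lambda>q. Psi b \<sigma> \<pi> q / q) \<longlongrightarrow> b) (at_right 0)"
proof -
  have "((\<lambda>q. b + (1/2) * \<sigma>\<^sup>2 * q + jump_part q / q) \<longlongrightarrow> b + (1/2) * \<sigma>\<^sup>2 * 0 + 0) (at_right 0)"
    by (intro tendsto_intros jump_part_div_tendsto_0)
  moreover have "eventually (\<lambda>q. b + (1/2) * \<sigma>\<^sup>2 * q + jump_part q / q = Psi b \<sigma> \<pi> q / q) (at_right 0)"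
    by (auto simp: eventually_at_filter Psi_eq_jump_part field_simps power2_eq_square)
  ultimately show ?thesis
    by (simp add: tendsto_cong)
qed

lemma continuous_on_Psi: "continuous_on {0<..} (Psi b \<sigma> \<pi>)"
  unfolding Psi_eq_jump_part[abs_def] by (intro continuous_intros continuous_on_jump_part)

lemma Psi_pos: "0 < b \<Longrightarrow> 0 < q \<Longrightarrow> 0 < Psi b \<sigma> \<pi> q"
  using jump_part_nonneg[of q] by (simp add: Psi_eq_jump_part add_pos_nonneg)

end

locale noncritical_branching = branching_levy_measure \<pi>
  for \<pi> :: "real measure" +
  fixes \<sigma> b l0 :: real
  assumes b_nonzero: "b \<noteq> 0"
    and l0_pos: "0 < l0"
    and l0_below_rho: "b < 0 \<Longrightarrow> ereal l0 < rho_Psi b \<sigma> \<pi>"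
begin

abbreviation \<Psi> :: "real \<Rightarrow> real" where "\<Psi> \<equiv> Psi b \<sigma> \<pi>"
abbreviation \<phi> :: "real \<Rightarrow> real" where "\<phi> \<equiv> phi b \<sigma> \<pi> l0"
abbreviation g :: "real \<Rightarrow> real" where "g \<equiv> ginv b \<sigma> \<pi> l0"

lemma Psi_neg:
  assumes "b < 0" "0 < q" "q \<le> l0"
  shows "\<Psi> q < 0"
proof (rule ccontr)
  assume "\<not> \<Psi> q < 0"
  with assms(2) have "rho_Psi b \<sigma> \<pi> \<le> ereal q"
    unfolding rho_Psi_def by (intro Inf_lower) auto
  also have "\<dots> \<le> ereal l0"
    using assms(3) by simp
  finally show False
    using l0_below_rho[OF assms(1)] by simp
qed

lemma sgn_Psi: "0 < u \<Longrightarrow> u \<le> l0 \<Longrightarrow> sgn (\<Psi> u) = sgn b"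
  using Psi_pos[of b u \<sigma>] Psi_neg[of u] b_nonzero by (cases "0 < b") auto

lemma Psi_nonzero: "0 < u \<Longrightarrow> u \<le> l0 \<Longrightarrow> \<Psi> u \<noteq> 0"
  using sgn_Psi b_nonzero by (metis sgn_eq_0_iff)

lemma continuous_on_inv_abs_Psi: "continuous_on {0<..l0} (\<lambda>u. 1 / \<bar>\<Psi> u\<bar>)"
  using Psi_nonzero by (intro continuous_intros continuous_on_subset[OF continuous_on_Psi]) auto

lemma phi_has_derivative_within:
  assumes "0 < c" "t \<in> {c..l0}"
  shows "(\<phi> has_real_derivative - (1 / \<bar>\<Psi> t\<bar>)) (at t within {c..l0})"
  unfolding phi_def[abs_def]
  using assms by (intro integral_has_real_derivative' continuous_on_subset[OF continuous_on_inv_abs_Psi]) auto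

lemma continuous_on_phi: "0 < c \<Longrightarrow> continuous_on {c..l0} \<phi>"
  unfolding continuous_on_eq_continuous_within
  using phi_has_derivative_within by (blast intro: DERIV_continuous)

lemma phi_has_real_derivative:
  assumes "0 < x" "x < l0"
  shows "(\<phi> has_real_derivative - (1 / \<bar>\<Psi> x\<bar>)) (at x)"
proof -
  have "at x within {x / 2..l0} = at x"
    using assms by (intro at_within_Icc_at) auto
  then show ?thesis
    using phi_has_derivative_within[of "x / 2" x] assms by auto
qed

lemma phi_l0 [simp]: "\<phi> l0 = 0"
  by (simp add: phi_def)

lemma phi_diff:
  assumes "0 < x" "x \<le> y" "y \<le> l0"
  shows "\<phi> x - \<phi> y = integral {x..y} (\<lambda>u. 1 / \<bar>\<Psi> u\<bar>)"
proof -
  have "(\<lambda>u. 1 / \<bar>\<Psi> u\<bar>) integrable_on {x..l0}"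
    using assms by (intro integrable_continuous_real continuous_on_subset[OF continuous_on_inv_abs_Psi]) auto
  then show ?thesis
    using Henstock_Kurzweil_Integration.integral_combine[of x y l0 "\<lambda>u. 1 / \<bar>\<Psi> u\<bar>"] assms
    by (simp add: phi_def)
qed

lemma phi_strict_decreasing:
  assumes "0 < x" "x < y" "y \<le> l0"
  shows "\<phi> y < \<phi> x"
proof (rule DERIV_neg_imp_decreasing_open[OF \<open>x < y\<close>])
  show "continuous_on {x..y} \<phi>"
    using continuous_on_phi[of x] assms by (auto intro: continuous_on_subset)
  show "\<exists>d. (\<phi> has_real_derivative d) (at u) \<and> d < 0" if "x < u" "u < y" for u
    using phi_has_real_derivative[of u] Psi_nonzero[of u] that assms by (auto intro!: exI)
qed

lemma phi_pos: "0 < x \<Longrightarrow> x < l0 \<Longrightarrow> 0 < \<phi> x"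
  using phi_strict_decreasing[of x l0] by simp

lemma tendsto_mult_inv_abs_Psi: "((\<lambda>u. u * (1 / \<bar>\<Psi> u\<bar>)) \<longlongrightarrow> 1 / \<bar>b\<bar>) (at_right 0)"
proof -
  have "((\<lambda>u. 1 / \<bar>\<Psi> u / u\<bar>) \<longlongrightarrow> 1 / \<bar>b\<bar>) (at_right 0)"
    using b_nonzero by (intro tendsto_intros Psi_div_tendsto) auto
  moreover have "eventually (\<lambda>u. 1 / \<bar>\<Psi> u / u\<bar> = u * (1 / \<bar>\<Psi> u\<bar>)) (at_right 0)"
    by (auto simp: eventually_at_filter)
  ultimately show ?thesis
    by (rule Lim_transform_eventually)
qed

lemma phi_asymp_equiv: "\<phi> \<sim>[at_right 0] (\<lambda>l. - (1 / \<bar>b\<bar>) * ln l)"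
proof -
  have "((\<lambda>l. \<phi> l / - ln l) \<longlongrightarrow> 1 / \<bar>b\<bar>) (at_right 0)"
  proof (rule lhopital_right_0_at_top)
    show "filterlim (\<lambda>l::real. - ln l) at_top (at_right 0)"
      using ln_at_0 by (simp add: filterlim_uminus_at_bot)
    have near_0: "eventually (\<lambda>l. 0 < l \<and> l < l0) (at_right 0)"
      using l0_pos by (auto simp: eventually_at_right_field)
    show "eventually (\<lambda>l. (\<phi> has_real_derivative - (1 / \<bar>\<Psi> l\<bar>)) (at l)) (at_right 0)"
      using near_0 by eventually_elim (auto intro: phi_has_real_derivative)
    show "eventually (\<lambda>l. ((\<lambda>l. - ln l) has_real_derivative - (1 / l)) (at l)) (at_right (0::real))"
      using near_0 by eventually_elim (auto intro!: derivative_eq_intros)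
    show "eventually (\<lambda>l. - (1 / l) \<noteq> 0) (at_right (0::real))"
      using near_0 by eventually_elim auto
    have "eventually (\<lambda>l. l * (1 / \<bar>\<Psi> l\<bar>) = - (1 / \<bar>\<Psi> l\<bar>) / - (1 / l)) (at_right 0)"
      by (auto simp: eventually_at_filter)
    with tendsto_mult_inv_abs_Psi
    show "((\<lambda>l. - (1 / \<bar>\<Psi> l\<bar>) / - (1 / l)) \<longlongrightarrow> 1 / \<bar>b\<bar>) (at_right 0)"
      by (rule Lim_transform_eventually)
  qed
  then have "\<phi> \<sim>[at_right 0] (\<lambda>l. 1 / \<bar>b\<bar> * - ln l)"
    using b_nonzero by (intro asymp_equivI'_const) auto
  then show ?thesis
    by simp
qed

lemma filterlim_phi_at_top: "filterlim \<phi> at_top (at_right 0)"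
  using b_nonzero
  by (intro asymp_equiv_at_top_transfer[OF asymp_equiv_symI[OF phi_asymp_equiv]]
        filterlim_neg_mult_ln_at_top[OF filterlim_ident]) simp

lemma phi_inj:
  assumes "0 < x" "x \<le> l0" "0 < y" "y \<le> l0" "\<phi> x = \<phi> y"
  shows "x = y"
proof (rule ccontr)
  assume "x \<noteq> y"
  then consider "x < y" | "y < x"
    by linarith
  then show False
    using phi_strict_decreasing[of x y] phi_strict_decreasing[of y x] assms by cases auto
qed

lemma ex1_phi_eq:
  assumes "0 < x"
  shows "\<exists>!l. 0 < l \<and> l < l0 \<and> \<phi> l = x"
proof -
  have "eventually (\<lambda>l. x < \<phi> l) (at_right 0)"
    using filterlim_phi_at_top by (simp add: filterlim_at_top_dense)
  moreover have "eventually (\<lambda>l. 0 < l \<and> l < l0) (at_right 0)"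
    using l0_pos by (auto simp: eventually_at_right_field)
  ultimately have "eventually (\<lambda>l. x < \<phi> l \<and> 0 < l \<and> l < l0) (at_right 0)"
    by (rule eventually_conj)
  then obtain l1 where l1: "x < \<phi> l1" "0 < l1" "l1 < l0"
    using eventually_happens'[OF trivial_limit_at_right_real] by blast
  obtain l where "l1 \<le> l" "l \<le> l0" "\<phi> l = x"
    using IVT2'[of \<phi> l0 x l1] continuous_on_phi[OF \<open>0 < l1\<close>] l1 assms by auto
  moreover have "l \<noteq> l0"
    using \<open>\<phi> l = x\<close> assms by auto
  ultimately have "0 < l \<and> l < l0 \<and> \<phi> l = x"
    using l1 by auto
  moreover have "m = l" if "0 < m" "m < l0" "\<phi> m = x" for m
    using phi_inj[of m l] that \<open>0 < l \<and> l < l0 \<and> \<phi> l = x\<close> by simp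
  ultimately show ?thesis
    by blast
qed

lemma ginv_spec: "0 < x \<Longrightarrow> 0 < g x \<and> g x < l0 \<and> \<phi> (g x) = x"
  unfolding ginv_def by (rule theI') (rule ex1_phi_eq)

lemma ginv_phi: "0 < l \<Longrightarrow> l < l0 \<Longrightarrow> g (\<phi> l) = l"
  unfolding ginv_def using ex1_phi_eq[OF phi_pos] by (intro the1_equality) auto


lemma ginv_less_iff:
  assumes "0 < x" "0 < y" "y \<le> l0"
  shows "g x < y \<longleftrightarrow> \<phi> y < x"
proof
  assume "g x < y"
  then show "\<phi> y < x"
    using phi_strict_decreasing[of "g x" y] ginv_spec[OF assms(1)] assms by simp
next
  assume "\<phi> y < x"
  then have "\<not> y \<le> g x"
    using phi_strict_decreasing[of y "g x"] ginv_spec[OF assms(1)] assms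
    by (cases "y = g x") auto
  then show "g x < y"
    by simp
qed

lemma filterlim_ginv_at_top: "filterlim g (at_right 0) at_top"
proof (rule tendsto_imp_filterlim_at_right)
  show "eventually (\<lambda>x. 0 < g x) at_top"
    using eventually_gt_at_top[of 0] by eventually_elim (use ginv_spec in auto)
  show "(g \<longlongrightarrow> 0) at_top"
  proof (rule order_tendstoI)
    show "eventually (\<lambda>x. a < g x) at_top" if "a < 0" for a
      using eventually_gt_at_top[of 0] by eventually_elim (use ginv_spec that in force)
    show "eventually (\<lambda>x. g x < a) at_top" if "0 < a" for a
    proof -
      define y where "y = min a l0"
      have "eventually (\<lambda>x. max 0 (\<phi> y) < x) at_top"
        by (rule eventually_gt_at_top)
      then show ?thesis
        by eventually_elim (use ginv_less_iff[of _ y] that l0_pos in \<open>auto simp: y_def\<close>)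
    qed
  qed
qed

lemma tendsto_ginv_at_right_0: "(g \<longlongrightarrow> l0) (at_right 0)"
proof (rule order_tendstoI)
  show "eventually (\<lambda>x. g x < a) (at_right 0)" if "l0 < a" for a
    using eventually_at_right_less[of 0] by eventually_elim (use ginv_spec that in force)
  show "eventually (\<lambda>x. a < g x) (at_right 0)" if "a < l0" for a
  proof -
    define y where "y = (max a 0 + l0) / 2"
    have y: "0 < y" "y < l0" "a < y"
      using that l0_pos by (auto simp: y_def)
    have "eventually (\<lambda>x. 0 < x \<and> x < \<phi> y) (at_right 0)"
      using phi_pos[OF y(1,2)] by (auto simp: eventually_at_right_field)
    then show ?thesis
    proof eventually_elim
      case (elim x)
      then have "\<not> g x < y"
        using ginv_less_iff[of x y] y by simp
      then show ?case
        using y by simp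
    qed
  qed
qed

lemma continuous_on_ginv: "continuous_on {0<..} g"
  unfolding continuous_on_eq_continuous_at[OF open_greaterThan]
proof
  fix x :: real
  assume "x \<in> {0<..}"
  then have l: "0 < g x" "g x < l0" "\<phi> (g x) = x"
    using ginv_spec by auto
  define d where "d = min (g x) (l0 - g x) / 2"
  have "isCont g (\<phi> (g x))"
  proof (rule isCont_inverse_function[where f = \<phi> and x = "g x"])
    show "0 < d"
      using l by (simp add: d_def)
    show "g (\<phi> z) = z" "isCont \<phi> z" if "\<bar>z - g x\<bar> \<le> d" for z
    proof -
      have "d \<le> g x / 2" "d \<le> (l0 - g x) / 2" "\<bar>z - g x\<bar> \<le> d"
        using that by (simp_all add: d_def)
      then have "0 < z" "z < l0"
        using l by (auto simp: abs_le_iff)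
      then show "g (\<phi> z) = z" "isCont \<phi> z"
        by (auto intro: ginv_phi DERIV_isCont phi_has_real_derivative)
    qed
  qed
  then show "isCont g x"
    using l by simp
qed

lemma ln_ginv_asymp_equiv: "(\<lambda>x. - ln (g x)) \<sim>[at_top] (\<lambda>x. \<bar>b\<bar> * x)"
proof -
  have "(\<lambda>x. \<phi> (g x)) \<sim>[at_top] (\<lambda>x. - (1 / \<bar>b\<bar>) * ln (g x))"
    by (rule asymp_equiv_compose'[OF phi_asymp_equiv filterlim_ginv_at_top])
  moreover have "eventually (\<lambda>x. \<phi> (g x) = x) at_top"
    using eventually_gt_at_top[of 0] by eventually_elim (use ginv_spec in auto)
  ultimately have "(\<lambda>x. x) \<sim>[at_top] (\<lambda>x. - (1 / \<bar>b\<bar>) * ln (g x))"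
    by (rule asymp_equiv_transfer) simp
  then have "(\<lambda>x. \<bar>b\<bar> * x) \<sim>[at_top] (\<lambda>x. \<bar>b\<bar> * (- (1 / \<bar>b\<bar>) * ln (g x)))"
    by (intro asymp_equiv_mult asymp_equiv_refl)
  then show ?thesis
    using b_nonzero by (simp add: asymp_equiv_sym)
qed

lemma ln_ginv_compose_asymp_equiv:
  "filterlim X at_top F \<Longrightarrow> (\<lambda>t. ln (g (X t))) \<sim>[F] (\<lambda>t. - \<bar>b\<bar> * X t)"
  using asymp_equiv_uminus[OF asymp_equiv_compose'[OF ln_ginv_asymp_equiv]] by simp

lemma phi_ginv_mult_asymp_equiv:
  assumes "filterlim lt (at_right 0) at_top"
  shows "(\<lambda>t. \<phi> (g t * lt t) - t) \<sim>[at_top] (\<lambda>t. - (1 / \<bar>b\<bar>) * ln (lt t))"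
proof -
  have small: "eventually (\<lambda>t. 0 < t \<and> 0 < lt t \<and> lt t < 1) at_top"
    using eventually_gt_at_top[of 0] eventually_at_right_0_between[OF assms zero_less_one]
    by eventually_elim simp
  have "(\<lambda>t. integral {g t * lt t..g t} (\<lambda>u. 1 / \<bar>\<Psi> u\<bar>))
      \<sim>[at_top] (\<lambda>t. 1 / \<bar>b\<bar> * (ln (g t) - ln (g t * lt t)))"
  proof (rule integral_asymp_equiv_ln_ratio[OF tendsto_mult_inv_abs_Psi _ continuous_on_inv_abs_Psi
        l0_pos filterlim_ginv_at_top])
    show "eventually (\<lambda>t. 0 < g t * lt t \<and> g t * lt t \<le> g t) at_top"
      using small by eventually_elim (use ginv_spec in \<open>auto simp: mult_le_cancel_left1\<close>)
  qed (use b_nonzero in simp)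
  moreover have "eventually (\<lambda>t. integral {g t * lt t..g t} (\<lambda>u. 1 / \<bar>\<Psi> u\<bar>) = \<phi> (g t * lt t) - t
      \<and> 1 / \<bar>b\<bar> * (ln (g t) - ln (g t * lt t)) = - (1 / \<bar>b\<bar>) * ln (lt t)) at_top"
    using small
  proof eventually_elim
    case (elim t)
    with ginv_spec[of t] have "0 < g t * lt t" "g t * lt t \<le> g t" "g t < l0" "\<phi> (g t) = t" "0 < g t"
      by (auto simp: mult_le_cancel_left1)
    then show ?case
      using phi_diff[of "g t * lt t" "g t"] elim by (simp add: ln_mult)
  qed
  ultimately show ?thesis
    by (auto elim: asymp_equiv_transfer eventually_mono)
qed

lemma ln_ginv_phi_ginv_mult_asymp_equiv:
  assumes "filterlim lt (at_right 0) at_top"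
  shows "(\<lambda>t. ln (g (\<phi> (g t * lt t) - t))) \<sim>[at_top] (\<lambda>t. ln (lt t))"
proof -
  note X = phi_ginv_mult_asymp_equiv[OF assms]
  have "filterlim (\<lambda>t. \<phi> (g t * lt t) - t) at_top at_top"
    using b_nonzero
    by (intro asymp_equiv_at_top_transfer[OF asymp_equiv_symI[OF X]] filterlim_neg_mult_ln_at_top[OF assms]) simp
  then have "(\<lambda>t. ln (g (\<phi> (g t * lt t) - t))) \<sim>[at_top] (\<lambda>t. - \<bar>b\<bar> * (\<phi> (g t * lt t) - t))"
    by (rule ln_ginv_compose_asymp_equiv)
  also have "\<dots> \<sim>[at_top] (\<lambda>t. - \<bar>b\<bar> * (- (1 / \<bar>b\<bar>) * ln (lt t)))"
    by (intro asymp_equiv_mult asymp_equiv_refl X)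
  also have "(\<lambda>t. - \<bar>b\<bar> * (- (1 / \<bar>b\<bar>) * ln (lt t))) = (\<lambda>t. ln (lt t))"
    using b_nonzero by simp
  finally show ?thesis .
qed

end

locale cumulant_semigroup = noncritical_branching +
  fixes v :: "real \<Rightarrow> real \<Rightarrow> real"
  assumes v_init: "\<And>l. l \<ge> 0 \<Longrightarrow> v 0 l = l"
    and v_ode: "\<And>l t. l \<ge> 0 \<Longrightarrow> t \<ge> 0 \<Longrightarrow>
                 ((\<lambda>s. v s l) has_real_derivative (- Psi b \<sigma> \<pi> (v t l))) (at t within {0..})"
begin

lemma continuous_on_v: "l \<ge> 0 \<Longrightarrow> continuous_on {0..} (\<lambda>t. v t l)"
  unfolding continuous_on_eq_continuous_within using v_ode by (blast intro: DERIV_continuous)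

lemma phi_v_has_derivative:
  assumes "l \<ge> 0" "r \<ge> 0" "0 < v r l" "v r l < l0"
  shows "((\<lambda>s. \<phi> (v s l)) has_real_derivative sgn b) (at r within {0..})"
proof -
  have "((\<lambda>s. \<phi> (v s l)) has_real_derivative - (1 / \<bar>\<Psi> (v r l)\<bar>) * - \<Psi> (v r l)) (at r within {0..})"
    using DERIV_chain[OF phi_has_real_derivative[OF assms(3,4)] v_ode[OF assms(1,2)]] by (simp add: o_def)
  moreover have "- (1 / \<bar>\<Psi> (v r l)\<bar>) * - \<Psi> (v r l) = sgn b"
    using sgn_Psi[of "v r l"] assms(3,4) by (simp add: sgn_if split: if_splits)
  ultimately show ?thesis
    by simp
qed

lemma phi_v_locally_affine:
  assumes "l \<ge> 0" "convex J" "J \<subseteq> {0..}" "s \<in> J" "0 < v s l" "v s l < l0"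
  obtains e where "e > 0"
    and "\<And>r. r \<in> J \<Longrightarrow> dist r s < e \<Longrightarrow>
           0 < v r l \<and> v r l < l0 \<and> \<phi> (v r l) = \<phi> (v s l) + sgn b * (r - s)"
proof -
  have "0 < min (v s l) (l0 - v s l)"
    using assms(5,6) by simp
  with continuous_on_subset[OF continuous_on_v[OF assms(1)] assms(3), unfolded continuous_on_iff] assms(4)
  obtain e where "e > 0" and e: "\<And>r. r \<in> J \<Longrightarrow> dist r s < e \<Longrightarrow> dist (v r l) (v s l) < min (v s l) (l0 - v s l)"
    by metis
  define C where "C = J \<inter> ball s e"
  have inside: "0 < v r l \<and> v r l < l0" if "r \<in> C" for r
    using e[of r] that by (auto simp: C_def dist_real_def dist_commute abs_less_iff)
  have "convex C"
    unfolding C_def by (intro convex_Int assms(2) convex_ball)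
  moreover have "((\<lambda>r. \<phi> (v r l) - sgn b * r) has_real_derivative 0) (at r within C)" if "r \<in> C" for r
  proof -
    have "((\<lambda>r. \<phi> (v r l) - sgn b * r) has_real_derivative sgn b - sgn b * 1) (at r within {0..})"
      using that assms(3) inside[OF that]
      by (intro DERIV_diff DERIV_cmult DERIV_ident phi_v_has_derivative assms(1)) (auto simp: C_def)
    then show ?thesis
      using assms(3) by (auto intro: has_field_derivative_subset simp: C_def)
  qed
  ultimately obtain c where c: "\<forall>r\<in>C. \<phi> (v r l) - sgn b * r = c"
    using has_field_derivative_zero_constant by blast
  have "s \<in> C"
    using assms(4) \<open>e > 0\<close> by (simp add: C_def)
  show ?thesis
  proof (rule that[OF \<open>e > 0\<close>])
    fix r
    assume "r \<in> J" "dist r s < e"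
    then have "r \<in> C"
      by (simp add: C_def dist_commute)
    then show "0 < v r l \<and> v r l < l0 \<and> \<phi> (v r l) = \<phi> (v s l) + sgn b * (r - s)"
      using inside c \<open>s \<in> C\<close> by (force simp: algebra_simps)
  qed
qed

lemma v_eq_ginv_phi_shift:
  assumes "l \<ge> 0" "convex J" "J \<subseteq> {0..}" "s1 \<in> J" "0 < v s1 l" "v s1 l < l0"
    and pos: "\<And>s. s \<in> J \<Longrightarrow> 0 < \<phi> (v s1 l) + sgn b * (s - s1)"
    and "s \<in> J"
  shows "v s l = g (\<phi> (v s1 l) + sgn b * (s - s1))"
proof -
  define h where "h s = \<phi> (v s1 l) + sgn b * (s - s1)" for s
  define K where "K = {s \<in> J. v s l - g (h s) = 0}"
  have "continuous_on J (\<lambda>s. g (h s))"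
    using pos by (intro continuous_on_compose2[OF continuous_on_ginv]) (auto simp: h_def intro!: continuous_intros)
  then have "closedin (top_of_set J) K"
    unfolding K_def using assms(3)
    by (intro continuous_closedin_preimage_constant continuous_intros continuous_on_subset[OF continuous_on_v[OF assms(1)]])
  moreover have "openin (top_of_set J) K"
    unfolding openin_euclidean_subtopology_iff
  proof (intro conjI ballI)
    show "K \<subseteq> J"
      by (auto simp: K_def)
    fix s0
    assume "s0 \<in> K"
    then have "s0 \<in> J" and "v s0 l = g (h s0)"
      by (auto simp: K_def)
    then have "0 < v s0 l" "v s0 l < l0" "\<phi> (v s0 l) = h s0"
      using ginv_spec[of "h s0"] pos by (auto simp: h_def)
    then obtain e where "e > 0"
      and e: "\<And>r. r \<in> J \<Longrightarrow> dist r s0 < e \<Longrightarrow> 0 < v r l \<and> v r l < l0 \<and> \<phi> (v r l) = h s0 + sgn b * (r - s0)"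
      using phi_v_locally_affine[OF assms(1-3) \<open>s0 \<in> J\<close>] by metis
    have "r \<in> K" if "r \<in> J" "dist r s0 < e" for r
    proof -
      have "h r = \<phi> (v r l)"
        using e[OF that] by (simp add: h_def algebra_simps)
      then show ?thesis
        using ginv_phi[of "v r l"] e[OF that] \<open>r \<in> J\<close> by (simp add: K_def)
    qed
    with \<open>e > 0\<close> show "\<exists>e>0. \<forall>r\<in>J. dist r s0 < e \<longrightarrow> r \<in> K"
      by blast
  qed
  moreover have "s1 \<in> K"
    using assms(4-6) ginv_phi by (simp add: K_def h_def)
  ultimately have "K = J"
    using connected_clopen[THEN iffD1, OF convex_connected[OF assms(2)], rule_format, of K] by blast
  then show ?thesis
    using \<open>s \<in> J\<close> by (auto simp: K_def h_def)
qed

lemma v_eq_ginv_subcritical: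
  assumes "0 < b" "0 < l" "l < l0" "0 \<le> t"
  shows "v t l = g (\<phi> l + t)"
  using v_eq_ginv_phi_shift[of l "{0..}" 0 t] phi_pos[of l] v_init assms by simp

lemma v_eq_ginv_supercritical:
  assumes "b < 0" "0 < l" "l < l0" "0 \<le> t" "t < \<phi> l"
  shows "v t l = g (\<phi> l - t)"
  using v_eq_ginv_phi_shift[of l "{0..t}" 0 t] v_init assms by simp

lemma v_ginv_eq_l0:
  assumes "b < 0" "0 < t"
  shows "v t (g t) = l0"
proof -
  have l: "0 < g t" "g t < l0" "\<phi> (g t) = t"
    using ginv_spec[OF assms(2)] by auto
  have "((\<lambda>s. v s (g t)) \<longlongrightarrow> v t (g t)) (at t within {0..})"
    using continuous_on_v[of "g t"] l assms by (simp add: continuous_on_def)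
  then have "((\<lambda>s. v s (g t)) \<longlongrightarrow> v t (g t)) (at t within {0..<t})"
    by (rule tendsto_within_subset) auto
  moreover have "at t within {0..<t} = at_left t"
    using assms by (intro at_within_nhd[where S = "{0<..}"]) auto
  ultimately have lim_v: "((\<lambda>s. v s (g t)) \<longlongrightarrow> v t (g t)) (at_left t)"
    by simp
  have "filterlim (\<lambda>s. t - s) (at_right 0) (at_left t)"
    by (auto simp: filterlim_at eventually_at_filter intro!: tendsto_eq_intros)
  then have "((\<lambda>s. g (t - s)) \<longlongrightarrow> l0) (at_left t)"
    by (rule filterlim_compose[OF tendsto_ginv_at_right_0])
  moreover have "eventually (\<lambda>s. g (t - s) = v s (g t)) (at_left t)"
    using eventually_at_left_real[OF assms(2)]
    by eventually_elim (use v_eq_ginv_supercritical[of "g t"] l assms(1) in auto)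
  ultimately have lim_l0: "((\<lambda>s. v s (g t)) \<longlongrightarrow> l0) (at_left t)"
    by (rule Lim_transform_eventually)
  show ?thesis
    by (rule tendsto_unique[OF trivial_limit_at_left_real lim_v lim_l0])
qed

lemma v_inside_before_l0:
  assumes "b < 0" "0 < t" "0 \<le> l" "v t l = l0" "0 < e"
  obtains s where "t - e < s" "s < t" "0 < s" "0 < v s l" "v s l < l0"
proof -
  have "at t within {0..} = at t"
    using assms(2) by (intro at_within_interior) auto
  then have deriv: "((\<lambda>s. v s l) has_real_derivative - \<Psi> l0) (at t)"
    using v_ode[of l t] assms by simp
  have "0 < - \<Psi> l0"
    using Psi_neg[OF assms(1) l0_pos] by simp
  from DERIV_pos_inc_left[OF deriv this] assms(4)
  obtain d1 where "0 < d1" and below: "\<And>h. 0 < h \<Longrightarrow> h < d1 \<Longrightarrow> v (t - h) l < l0"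
    by auto
  from DERIV_isCont[OF deriv, unfolded continuous_at_eps_delta, rule_format, OF l0_pos] assms(4)
  obtain d2 where "0 < d2" and near: "\<And>s. dist s t < d2 \<Longrightarrow> dist (v s l) l0 < l0"
    by auto
  define h where "h = min (min d1 d2) (min t e) / 2"
  have "0 < h" "h < d1" "h < d2" "h < t" "h < e"
    using \<open>0 < d1\<close> \<open>0 < d2\<close> assms by (auto simp: h_def)
  then show ?thesis
    using that[of "t - h"] below[of h] near[of "t - h"] by (auto simp: dist_real_def abs_less_iff)
qed

lemma phi_eq_phi_v_add:
  assumes "b < 0" "0 \<le> l" "0 < s" "0 < v s l" "v s l < l0"
  shows "0 < l \<and> l < l0 \<and> \<phi> l = \<phi> (v s l) + s"
proof -
  have "v 0 l = g (\<phi> (v s l) + sgn b * (0 - s))"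
    using assms phi_pos[of "v s l"] by (intro v_eq_ginv_phi_shift[of l "{0..s}"]) auto
  then have "l = g (\<phi> (v s l) + s)"
    using v_init assms by simp
  then show ?thesis
    using ginv_spec[of "\<phi> (v s l) + s"] phi_pos[of "v s l"] assms by auto
qed

lemma eq_ginv_if_v_eq_l0:
  assumes "b < 0" "0 < t" "0 \<le> l" "v t l = l0"
  shows "l = g t"
proof -
  obtain s0 where "t - 1 < s0" "s0 < t" "0 < s0" "0 < v s0 l" "v s0 l < l0"
    by (rule v_inside_before_l0[OF assms zero_less_one])
  then have l: "0 < l" "l < l0"
    using phi_eq_phi_v_add[of l s0] assms by auto
  have "t \<le> \<phi> l"
  proof (rule ccontr)
    assume "\<not> t \<le> \<phi> l"
    then obtain s where "t - (t - \<phi> l) < s" "s < t" "0 < s" "0 < v s l" "v s l < l0"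
      using v_inside_before_l0[OF assms, of "t - \<phi> l"] by auto
    then show False
      using phi_eq_phi_v_add[of l s] phi_pos[of "v s l"] assms by auto
  qed
  moreover have "\<not> t < \<phi> l"
  proof
    assume "t < \<phi> l"
    then have "v t l = g (\<phi> l - t)"
      using v_eq_ginv_supercritical l assms by simp
    then show False
      using ginv_spec[of "\<phi> l - t"] \<open>t < \<phi> l\<close> assms by simp
  qed
  ultimately show ?thesis
    using ginv_phi[OF l] by simp
qed

lemma rho_t_eq_ginv:
  assumes "b < 0" "0 < t"
  shows "rho_t b v l0 t = g t"
proof -
  have "vinv v t l0 = g t"
    unfolding vinv_def
  proof (rule the_equality)
    show "0 \<le> g t \<and> v t (g t) = l0"
      using ginv_spec[OF assms(2)] v_ginv_eq_l0[OF assms] by simp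
  qed (use eq_ginv_if_v_eq_l0[OF assms] in blast)
  then show ?thesis
    using assms by (simp add: rho_t_def)
qed

lemma ln_v_asymp_equiv_subcritical:
  assumes "0 < b" "filterlim lt (at_right 0) at_top"
  shows "(\<lambda>t. ln (v t (lt t))) \<sim>[at_top] (\<lambda>t. - b * (t + \<phi> (lt t)))"
proof -
  have small: "eventually (\<lambda>t. 0 \<le> t \<and> 0 < lt t \<and> lt t < l0) at_top"
    using eventually_ge_at_top[of 0] eventually_at_right_0_between[OF assms(2) l0_pos]
    by eventually_elim simp
  then have "eventually (\<lambda>t. t \<le> t + \<phi> (lt t)) at_top"
    by eventually_elim (use phi_pos in \<open>auto intro: less_imp_le\<close>)
  then have "filterlim (\<lambda>t. t + \<phi> (lt t)) at_top at_top"
    by (rule filterlim_at_top_mono[OF filterlim_ident])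
  from ln_ginv_compose_asymp_equiv[OF this]
  have "(\<lambda>t. ln (g (t + \<phi> (lt t)))) \<sim>[at_top] (\<lambda>t. - b * (t + \<phi> (lt t)))"
    using assms(1) by simp
  moreover have "eventually (\<lambda>t. ln (g (t + \<phi> (lt t))) = ln (v t (lt t))) at_top"
    using small by eventually_elim (use v_eq_ginv_subcritical assms(1) in \<open>simp add: add.commute\<close>)
  ultimately show ?thesis
    by (rule asymp_equiv_transfer) simp
qed

lemma ln_v_rho_asymp_equiv_supercritical:
  assumes "b < 0" "filterlim lt (at_right 0) at_top"
  shows "(\<lambda>t. ln (v t (rho_t b v l0 t * lt t))) \<sim>[at_top] (\<lambda>t. ln (lt t))"
proof -
  have "eventually (\<lambda>t. ln (g (\<phi> (g t * lt t) - t)) = ln (v t (rho_t b v l0 t * lt t))) at_top"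
    using eventually_gt_at_top[of 0] eventually_at_right_0_between[OF assms(2) zero_less_one]
  proof eventually_elim
    case (elim t)
    then have "0 < g t * lt t" "g t * lt t < g t" "g t < l0" "\<phi> (g t) = t"
      using ginv_spec[of t] by auto
    moreover from this have "t < \<phi> (g t * lt t)"
      using phi_strict_decreasing[of "g t * lt t" "g t"] by simp
    ultimately show ?case
      using v_eq_ginv_supercritical[of "g t * lt t" t] rho_t_eq_ginv[of t] assms(1) elim by simp
  qed
  with ln_ginv_phi_ginv_mult_asymp_equiv[OF assms(2)] show ?thesis
    by (rule asymp_equiv_transfer) simp
qed

end

theorem lemma2:
  fixes \<sigma> b l0 :: real and \<pi> :: "real measure" and v :: "real \<Rightarrow> real \<Rightarrow> real"
  assumes sigma_nonneg: "\<sigma> \<ge> 0"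
    and pi_sets: "sets \<pi> = sets borel"
    and pi_support: "emeasure \<pi> {..0} = 0"
    and pi_sigma_finite: "sigma_finite_measure \<pi>"
    and pi_moment: "(\<integral>\<^sup>+ z\<in>{0<..}. ennreal (min z (z^2)) \<partial>\<pi>) < \<infinity>"
    and v_init: "\<And>l. l \<ge> 0 \<Longrightarrow> v 0 l = l"
    and v_ode: "\<And>l t. l \<ge> 0 \<Longrightarrow> t \<ge> 0 \<Longrightarrow>
                 ((\<lambda>s. v s l) has_real_derivative (- Psi b \<sigma> \<pi> (v t l))) (at t within {0..})"
    and b_nz: "b \<noteq> 0"
    and lambda0_pos: "0 < l0"
    and lambda0_rho: "b < 0 \<Longrightarrow> ereal l0 < rho_Psi b \<sigma> \<pi>"
  shows "phi b \<sigma> \<pi> l0 \<sim>[at_right 0] (\<lambda>l. - (1 / \<bar>b\<bar>) * ln l)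
         \<and> (\<lambda>x. - ln (ginv b \<sigma> \<pi> l0 x)) \<sim>[at_top] (\<lambda>x. \<bar>b\<bar> * x)
         \<and> (\<forall>lt :: real \<Rightarrow> real. filterlim lt (at_right 0) at_top \<longrightarrow>
               (b > 0 \<longrightarrow> (\<lambda>t. ln (v t (lt t))) \<sim>[at_top] (\<lambda>t. - b * (t + phi b \<sigma> \<pi> l0 (lt t))))
             \<and> (b < 0 \<longrightarrow> (\<lambda>t. ln (v t (rho_t b v l0 t * lt t))) \<sim>[at_top] (\<lambda>t. ln (lt t))))"
proof -
  interpret cumulant_semigroup \<pi> \<sigma> b l0 v
    using pi_sets pi_moment b_nz lambda0_pos lambda0_rho v_init v_ode by unfold_locales
  show ?thesis
    using phi_asymp_equiv ln_ginv_asymp_equiv ln_v_asymp_equiv_subcritical ln_v_rho_asymp_equiv_supercritical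
    by blast
qed

end
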